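(* Let $G$ be a graph and suppose we have a valid edge partition of $G$. Then the number of cycles compatible with this edge partition equals the number of edges of $G$ which lie in the spanning-tree part of the edge partition and whose two ends lie in the same tree of the 2-forest.
   Context: A spanning 2-forest is a spanning forest with exactly two trees (a tree may be a single vertex). A valid edge partition of a graph is a bipartition of its edge set such that one part is the edge set of a spanning tree and the other part is the edge set of a spanning 2-forest. A valid edge partition induces a bipartition of the vertex set according to which tree of the 2-forest each vertex lies in. A cycle $C$ is compatible with the valid edge partition if all vertices of $C$ lie in the same part of this vertex bipartition and exactly one edge of $C$ lies in the spanning-tree part of the edge partition. *)

theory Defs
  imports Main
begin

definition simple_graph :: "'a set \<Rightarrow> 'a set set \<Rightarrow> bool" where
  "simple_graph V E \<longleftrightarrow> finite V \<and>
     (\<forall>e\<in>E. \<exists>u v. e = {u, v} \<and> u \<noteq> v \<and> u \<in> V \<and> v \<in> V)"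

definition is_cycle :: "'a set set \<Rightarrow> bool" where
  "is_cycle C \<longleftrightarrow> (\<exists>vs. length vs \<ge> 3 \<and> distinct vs \<and>
      C = (\<lambda>i. {vs ! i, vs ! (Suc i mod length vs)}) ` {..<length vs})"

definition conn :: "'a set set \<Rightarrow> 'a \<Rightarrow> 'a \<Rightarrow> bool" where
  "conn F u v \<longleftrightarrow> (\<lambda>x y. {x, y} \<in> F)\<^sup>*\<^sup>* u v"

definition acyclic_edges :: "'a set set \<Rightarrow> bool" where
  "acyclic_edges F \<longleftrightarrow> \<not> (\<exists>C. C \<subseteq> F \<and> is_cycle C)"

definition components :: "'a set \<Rightarrow> 'a set set \<Rightarrow> 'a set set" where
  "components V F = (\<lambda>u. {v \<in> V. conn F u v}) ` V"

definition spanning_tree :: "'a set \<Rightarrow> 'a set set \<Rightarrow> 'a set set \<Rightarrow> bool" where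
  "spanning_tree V E T \<longleftrightarrow> T \<subseteq> E \<and> acyclic_edges T \<and>
     (\<forall>u\<in>V. \<forall>v\<in>V. conn T u v)"

text \<open>A spanning forest with exactly two trees (a tree may be a single vertex).\<close>
definition spanning_2forest :: "'a set \<Rightarrow> 'a set set \<Rightarrow> 'a set set \<Rightarrow> bool" where
  "spanning_2forest V E F \<longleftrightarrow> F \<subseteq> E \<and> acyclic_edges F \<and> card (components V F) = 2"

definition valid_edge_partition :: "'a set \<Rightarrow> 'a set set \<Rightarrow> 'a set set \<Rightarrow> 'a set set \<Rightarrow> bool" where
  "valid_edge_partition V E T F \<longleftrightarrow> T \<union> F = E \<and> T \<inter> F = {} \<and>
     spanning_tree V E T \<and> spanning_2forest V E F"

definition compatible :: "'a set set \<Rightarrow> 'a set set \<Rightarrow> 'a set set \<Rightarrow> bool" where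
  "compatible T F C \<longleftrightarrow> (\<forall>u\<in>\<Union>C. \<forall>v\<in>\<Union>C. conn F u v) \<and> card (C \<inter> T) = 1"

end

theory Submission
  imports Defs
begin

text \<open>Map a compatible cycle to its unique edge in the spanning-tree part T. The other
  edges of the cycle lie in F and form a path in F joining the ends of that edge. Since F is
  a forest, this path is the only one between these ends, so the map is injective; and an
  edge of T whose ends lie in the same tree of F is closed up into a compatible cycle by the
  F-path between its ends, so the map is onto.\<close>

fun path_edges :: "'a list \<Rightarrow> 'a set set" where
  "path_edges (x # y # zs) = insert {x, y} (path_edges (y # zs))"
| "path_edges _ = {}"

lemma path_edges_append:
  "path_edges (xs @ ys) = path_edges xs \<union> path_edges ys \<union>
     (if xs = [] \<or> ys = [] then {} else {{last xs, hd ys}})"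
  by (induction xs rule: path_edges.induct; cases ys) auto

lemma path_edges_conv_nth: "path_edges xs = (\<lambda>i. {xs ! i, xs ! Suc i}) ` {..<length xs - 1}"
proof (induction xs rule: path_edges.induct)
  case (1 x y zs)
  have "length (x # y # zs) - 1 = Suc (length (y # zs) - 1)" by simp
  moreover have "(\<lambda>i. {(x # y # zs) ! i, (x # y # zs) ! Suc i}) ` {..<Suc (length (y # zs) - 1)}
     = insert {x, y} ((\<lambda>i. {(y # zs) ! i, (y # zs) ! Suc i}) ` {..<length (y # zs) - 1})"
    unfolding lessThan_Suc_eq_insert_0 image_insert image_image by simp
  ultimately show ?case using 1 by simp
qed auto

lemma path_edges_subset_set: "e \<in> path_edges xs \<Longrightarrow> e \<subseteq> set xs"
  by (induction xs rule: path_edges.induct) auto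

lemma mem_path_edgesE:
  assumes "e \<in> path_edges xs"
  obtains ys a b zs where "xs = ys @ a # b # zs" "e = {a, b}"
  using assms
proof (induction xs arbitrary: thesis rule: path_edges.induct)
  case (1 x y zs)
  show ?case
  proof (cases "e = {x, y}")
    case True
    then show ?thesis using "1.prems"(1)[of "[]"] by simp
  next
    case False
    then show ?thesis using 1 by (metis append_Cons insert_iff path_edges.simps(1))
  qed
qed auto

lemma path_edges_rev: "path_edges (rev xs) = path_edges xs"
proof (induction xs)
  case (Cons x xs)
  have "path_edges (rev (x # xs)) = path_edges xs \<union> (if xs = [] then {} else {{hd xs, x}})"
    using Cons by (simp add: path_edges_append last_rev)
  also have "\<dots> = path_edges ([x] @ xs)"
    by (subst path_edges_append) (auto simp: insert_commute)
  finally show ?case by simp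
qed simp

lemma conn_trans: "conn G a b \<Longrightarrow> conn G b c \<Longrightarrow> conn G a c"
  unfolding conn_def by simp

lemma conn_sym: "conn G a b \<Longrightarrow> conn G b a"
  unfolding conn_def
proof (induction rule: rtranclp_induct)
  case (step y z)
  then have "{z, y} \<in> G" by (simp add: insert_commute)
  then show ?case using step(3) by (rule converse_rtranclp_into_rtranclp)
qed simp

lemma conn_along_path: "path_edges xs \<subseteq> G \<Longrightarrow> x \<in> set xs \<Longrightarrow> conn G (hd xs) x"
proof (induction xs rule: path_edges.induct)
  case (1 a b zs)
  show ?case
  proof (cases "x = a")
    case True
    then show ?thesis by (simp add: conn_def)
  next
    case False
    then have "conn G b x" using 1 by auto
    moreover have "conn G a b" using "1.prems" unfolding conn_def by (simp add: r_into_rtranclp)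
    ultimately show ?thesis using conn_trans by fastforce
  qed
qed (auto simp: conn_def)

lemma conn_imp_distinct_path:
  assumes "conn G a b"
  obtains xs where "distinct xs" "xs \<noteq> []" "hd xs = a" "last xs = b" "path_edges xs \<subseteq> G"
  using assms unfolding conn_def
proof (induction arbitrary: thesis rule: converse_rtranclp_induct)
  case base
  show ?case by (rule base[of "[b]"]) auto
next
  case (step a y)
  obtain xs where xs: "distinct xs" "xs \<noteq> []" "hd xs = y" "last xs = b" "path_edges xs \<subseteq> G"
    using step.IH by blast
  show ?case
  proof (cases "a \<in> set xs")
    case True
    then obtain ys zs where sp: "xs = ys @ a # zs" by (meson split_list)
    then have "path_edges (a # zs) \<subseteq> G" using xs(5) path_edges_append[of ys "a # zs"] by auto
    then show ?thesis using step.prems[of "a # zs"] xs sp by auto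
  next
    case False
    have "path_edges (a # xs) \<subseteq> G" using xs step(1) by (cases xs) auto
    then show ?thesis using step.prems[of "a # xs"] False xs by auto
  qed
qed

lemma is_cycle_iff_closed_path:
  "is_cycle C \<longleftrightarrow>
     (\<exists>vs. 3 \<le> length vs \<and> distinct vs \<and> C = insert {hd vs, last vs} (path_edges vs))"
proof -
  have closed: "(\<lambda>i. {vs ! i, vs ! (Suc i mod length vs)}) ` {..<length vs}
      = insert {hd vs, last vs} (path_edges vs)" if "3 \<le> length vs" for vs :: "'a list"
  proof -
    let ?n = "length vs"
    have "{..<?n} = insert (?n - 1) {..<?n - 1}" using that by auto
    moreover have "(\<lambda>i. {vs ! i, vs ! (Suc i mod ?n)}) ` {..<?n - 1} = path_edges vs"
      unfolding path_edges_conv_nth by (rule image_cong) auto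
    moreover have "vs \<noteq> []" "Suc (?n - 1) = ?n" using that by auto
    then have "vs ! (?n - 1) = last vs" "vs ! (Suc (?n - 1) mod ?n) = hd vs"
      by (simp_all add: last_conv_nth hd_conv_nth)
    ultimately show ?thesis by (simp add: insert_commute)
  qed
  show ?thesis
    unfolding is_cycle_def by (intro ex_cong1 conj_cong refl) (simp add: closed)
qed

lemma closing_edge_notin_path_edges:
  assumes "distinct vs" "3 \<le> length vs"
  shows "{hd vs, last vs} \<notin> path_edges vs"
proof
  assume "{hd vs, last vs} \<in> path_edges vs"
  then obtain ps a b qs where sp: "vs = ps @ a # b # qs" "{hd vs, last vs} = {a, b}"
    by (rule mem_path_edgesE)
  have "ps = []"
    using assms(1) sp by (cases ps) (auto simp: doubleton_eq_iff)
  moreover have "qs = []"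
    using assms(1) sp by (cases qs rule: rev_cases) (auto simp: doubleton_eq_iff)
  ultimately show False using sp(1) assms(2) by simp
qed

lemma length_ge_3_if_closing_edge_new:
  assumes "xs \<noteq> []" "hd xs \<noteq> last xs" "{hd xs, last xs} \<notin> path_edges xs"
  shows "3 \<le> length xs"
  using assms
proof (cases xs rule: path_edges.cases)
  case (1 x y zs)
  then show ?thesis using assms by (cases zs) auto
qed auto

lemma not_acyclic_if_conn_without_edge:
  assumes "{a, b} \<in> F" "a \<noteq> b" "conn (F - {{a, b}}) a b"
  shows "\<not> acyclic_edges F"
proof -
  obtain xs where xs: "distinct xs" "xs \<noteq> []" "hd xs = a" "last xs = b"
    "path_edges xs \<subseteq> F - {{a, b}}"
    using assms(3) by (rule conn_imp_distinct_path)
  have "3 \<le> length xs" using length_ge_3_if_closing_edge_new[OF xs(2)] xs assms(2) by blast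
  then have "is_cycle (insert {hd xs, last xs} (path_edges xs))"
    unfolding is_cycle_iff_closed_path using xs(1) by blast
  moreover have "insert {hd xs, last xs} (path_edges xs) \<subseteq> F" using xs assms(1) by auto
  ultimately show ?thesis unfolding acyclic_edges_def by blast
qed

lemma acyclic_path_edges_subset:
  assumes "acyclic_edges F" "distinct xs" "ys \<noteq> []"
    and "hd xs = hd ys" "last xs = last ys"
    and "path_edges xs \<subseteq> F" "path_edges ys \<subseteq> F"
  shows "path_edges xs \<subseteq> path_edges ys"
proof
  fix f assume f: "f \<in> path_edges xs"
  show "f \<in> path_edges ys"
  proof (rule ccontr)
    assume f_new: "f \<notin> path_edges ys"
    obtain ps a b qs where sp: "xs = ps @ a # b # qs" "f = {a, b}"
      using f by (rule mem_path_edgesE)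
    have split: "path_edges xs = path_edges (ps @ [a]) \<union> path_edges (b # qs) \<union> {f}"
      using path_edges_append[of "ps @ [a]" "b # qs"] sp by simp
    have "f \<notin> path_edges (ps @ [a])" "f \<notin> path_edges (b # qs)"
      using assms(2) sp path_edges_subset_set by fastforce+
    then have "path_edges (ps @ [a]) \<subseteq> F - {f}" "path_edges (b # qs) \<subseteq> F - {f}"
      using split assms(6) by auto
    \<comment> \<open>walk back from a to the start, along ys to the end, and back to b\<close>
    then have start: "conn (F - {f}) (hd xs) a" and final: "conn (F - {f}) b (last xs)"
      using conn_along_path[of "ps @ [a]" _ a] conn_along_path[of "b # qs" _ "last (b # qs)"] sp(1)
      by (auto simp: hd_append)
    moreover have "conn (F - {f}) (hd xs) (last xs)"
      using conn_along_path[of ys "F - {f}" "last ys"] assms(3-5,7) f_new by auto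
    ultimately have "conn (F - {f}) a b"
      using conn_trans[OF conn_sym[OF start]] conn_trans[OF _ conn_sym[OF final]] by blast
    moreover have "a \<noteq> b" "{a, b} \<in> F" using assms(2,6) f sp by auto
    ultimately show False
      using not_acyclic_if_conn_without_edge[of a b F] assms(1) sp(2) by simp
  qed
qed

lemma acyclic_path_edges_unique:
  assumes "acyclic_edges F" "distinct xs" "distinct ys" "xs \<noteq> []" "ys \<noteq> []"
    and "{hd xs, last xs} = {hd ys, last ys}"
    and "path_edges xs \<subseteq> F" "path_edges ys \<subseteq> F"
  shows "path_edges xs = path_edges ys"
proof -
  obtain zs where zs: "distinct zs" "zs \<noteq> []" "hd zs = hd xs" "last zs = last xs"
    "path_edges zs = path_edges ys"
  proof (cases "hd xs = hd ys \<and> last xs = last ys")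
    case True
    then show ?thesis using that[of ys] assms(3,5) by simp
  next
    case False
    then have "hd xs = last ys" "last xs = hd ys"
      using assms(6) by (auto simp: doubleton_eq_iff)
    then show ?thesis
      using that[of "rev ys"] assms(3,5) by (simp add: path_edges_rev hd_rev last_rev)
  qed
  show ?thesis
    using acyclic_path_edges_subset[OF assms(1,2) zs(2) zs(3,4)[symmetric]]
      acyclic_path_edges_subset[OF assms(1) zs(1) assms(4) zs(3,4)] assms(7,8) zs(5)
    by blast
qed

lemma cycle_as_closed_path_through:
  assumes "is_cycle C" "e \<in> C"
  obtains xs where "distinct xs" "3 \<le> length xs" "C = insert e (path_edges xs)"
    "e = {hd xs, last xs}"
proof -
  obtain vs where vs: "3 \<le> length vs" "distinct vs" "C = insert {hd vs, last vs} (path_edges vs)"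
    using assms(1) unfolding is_cycle_iff_closed_path by blast
  show ?thesis
  proof (cases "e = {hd vs, last vs}")
    case True
    then show ?thesis using that vs by blast
  next
    case False
    then have "e \<in> path_edges vs" using vs(3) assms(2) by blast
    then obtain ps a b qs where sp: "vs = ps @ a # b # qs" "e = {a, b}"
      by (rule mem_path_edgesE)
    define xs where "xs = (b # qs) @ (ps @ [a])"
    have "path_edges vs = path_edges (ps @ [a]) \<union> path_edges (b # qs) \<union> {e}"
      using path_edges_append[of "ps @ [a]" "b # qs"] sp by simp
    moreover have "path_edges xs = path_edges (b # qs) \<union> path_edges (ps @ [a]) \<union> {{last vs, hd vs}}"
      using path_edges_append[of "b # qs" "ps @ [a]"] sp(1) unfolding xs_def by (cases ps) auto
    ultimately have "C = insert e (path_edges xs)"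
      using vs(3) by (auto simp: insert_commute)
    moreover have "distinct xs" "3 \<le> length xs" "e = {hd xs, last xs}"
      using vs sp unfolding xs_def by (auto simp: insert_commute)
    ultimately show ?thesis using that by blast
  qed
qed

lemma cycle_with_one_edge_off_forest:
  assumes "C \<subseteq> T \<union> F" "is_cycle C" "C \<inter> T = {e}"
  obtains xs where "distinct xs" "3 \<le> length xs" "C = insert e (path_edges xs)"
    "e = {hd xs, last xs}" "path_edges xs \<subseteq> F"
proof -
  obtain xs where xs: "distinct xs" "3 \<le> length xs" "C = insert e (path_edges xs)"
    "e = {hd xs, last xs}"
    using assms(2) by (rule cycle_as_closed_path_through) (use assms(3) in blast)
  have "e \<notin> path_edges xs"
    using closing_edge_notin_path_edges[OF xs(1,2)] xs(4) by simp
  then have "path_edges xs \<subseteq> F"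
    using assms(1,3) xs(3) by auto
  then show ?thesis using that xs by blast
qed

lemma cycle_determined_by_edge_off_forest:
  assumes "acyclic_edges F"
    and "C \<subseteq> T \<union> F" "is_cycle C" "C \<inter> T = {e}"
    and "C' \<subseteq> T \<union> F" "is_cycle C'" "C' \<inter> T = {e}"
  shows "C = C'"
proof -
  obtain xs where xs: "distinct xs" "3 \<le> length xs" "C = insert e (path_edges xs)"
    "e = {hd xs, last xs}" "path_edges xs \<subseteq> F"
    using assms(2-4) by (rule cycle_with_one_edge_off_forest)
  obtain ys where ys: "distinct ys" "3 \<le> length ys" "C' = insert e (path_edges ys)"
    "e = {hd ys, last ys}" "path_edges ys \<subseteq> F"
    using assms(5-7) by (rule cycle_with_one_edge_off_forest)
  have "path_edges xs = path_edges ys"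
    using acyclic_path_edges_unique[OF assms(1) xs(1) ys(1)] xs ys by fastforce
  then show ?thesis using xs(3) ys(3) by simp
qed

lemma cycle_closing_forest_path:
  assumes "e \<in> T" "T \<inter> F = {}" "e = {u, v}" "u \<noteq> v" "conn F u v"
  obtains C where "C \<subseteq> T \<union> F" "C \<inter> T = {e}" "is_cycle C"
    "\<forall>w\<in>\<Union>C. \<forall>w'\<in>\<Union>C. conn F w w'"
proof -
  obtain xs where xs: "distinct xs" "xs \<noteq> []" "hd xs = u" "last xs = v" "path_edges xs \<subseteq> F"
    using assms(5) by (rule conn_imp_distinct_path)
  have "3 \<le> length xs"
    using length_ge_3_if_closing_edge_new[OF xs(2)] xs assms by blast
  define C where "C = insert e (path_edges xs)"
  have "C \<subseteq> T \<union> F" "C \<inter> T = {e}"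
    using assms(1,2) xs(5) unfolding C_def by auto
  moreover have "is_cycle C"
    unfolding is_cycle_iff_closed_path C_def using \<open>3 \<le> length xs\<close> xs assms(3) by blast
  moreover have "conn F u w" if "w \<in> \<Union>C" for w
  proof -
    have "w \<in> set xs"
      using that assms(3) xs path_edges_subset_set unfolding C_def by fastforce
    then show ?thesis using conn_along_path[OF xs(5)] xs(3) by simp
  qed
  then have "\<forall>w\<in>\<Union>C. \<forall>w'\<in>\<Union>C. conn F w w'"
    by (auto intro: conn_trans[OF conn_sym])
  ultimately show ?thesis by (rule that)
qed

lemma simple_graph_edgeE:
  assumes "simple_graph V E" "e \<in> E"
  obtains u v where "e = {u, v}" "u \<noteq> v"
  using assms unfolding simple_graph_def by blast

lemma compatible_cycle_iff:
  "C \<subseteq> T \<union> F \<and> is_cycle C \<and> compatible T F C \<longleftrightarrow>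
     (\<exists>e. C \<subseteq> T \<union> F \<and> C \<inter> T = {e} \<and> is_cycle C \<and> (\<forall>u\<in>\<Union>C. \<forall>v\<in>\<Union>C. conn F u v))"
  unfolding compatible_def by (auto simp: card_1_singleton_iff)

lemma inj_on_compatible_cycle_tree_edge:
  assumes "acyclic_edges F"
  shows "inj_on (\<lambda>C. the_elem (C \<inter> T)) {C. C \<subseteq> T \<union> F \<and> is_cycle C \<and> compatible T F C}"
proof (rule inj_onI)
  fix C C'
  assume "C \<in> {C. C \<subseteq> T \<union> F \<and> is_cycle C \<and> compatible T F C}"
    and "C' \<in> {C. C \<subseteq> T \<union> F \<and> is_cycle C \<and> compatible T F C}"
    and same: "the_elem (C \<inter> T) = the_elem (C' \<inter> T)"
  then obtain e e' where "C \<subseteq> T \<union> F" "is_cycle C" "C \<inter> T = {e}"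
    and "C' \<subseteq> T \<union> F" "is_cycle C'" "C' \<inter> T = {e'}"
    unfolding mem_Collect_eq compatible_cycle_iff by meson
  with same show "C = C'" using cycle_determined_by_edge_off_forest[OF assms] by simp
qed

lemma compatible_cycle_tree_edges:
  assumes "simple_graph V (T \<union> F)" "T \<inter> F = {}"
  shows "(\<lambda>C. the_elem (C \<inter> T)) ` {C. C \<subseteq> T \<union> F \<and> is_cycle C \<and> compatible T F C}
       = {e \<in> T. \<forall>u\<in>e. \<forall>v\<in>e. conn F u v}" (is "_ ` ?S = ?R")
proof (intro equalityI subsetI)
  fix e assume "e \<in> (\<lambda>C. the_elem (C \<inter> T)) ` ?S"
  then obtain C where "C \<in> ?S" "e = the_elem (C \<inter> T)" by blast
  moreover obtain e' where "C \<inter> T = {e'}" "\<forall>u\<in>\<Union>C. \<forall>v\<in>\<Union>C. conn F u v"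
    using \<open>C \<in> ?S\<close> unfolding mem_Collect_eq compatible_cycle_iff by meson
  ultimately have "e \<in> C \<inter> T" "\<forall>u\<in>\<Union>C. \<forall>v\<in>\<Union>C. conn F u v" by simp_all
  then show "e \<in> ?R" by blast
next
  fix e assume e: "e \<in> ?R"
  then have "e \<in> T \<union> F" by simp
  with assms(1) obtain u v where uv: "e = {u, v}" "u \<noteq> v"
    by (rule simple_graph_edgeE)
  have "e \<in> T" "conn F u v" using e uv(1) by auto
  obtain C where "C \<subseteq> T \<union> F" "C \<inter> T = {e}" "is_cycle C"
    "\<forall>w\<in>\<Union>C. \<forall>w'\<in>\<Union>C. conn F w w'"
    by (rule cycle_closing_forest_path[OF \<open>e \<in> T\<close> assms(2) uv \<open>conn F u v\<close>])
  then have "C \<in> ?S" unfolding mem_Collect_eq compatible_cycle_iff by blast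
  with \<open>C \<inter> T = {e}\<close> show "e \<in> (\<lambda>C. the_elem (C \<inter> T)) ` ?S"
    by (intro image_eqI[of _ _ C]) simp_all
qed

theorem lemma5p2:
  assumes "simple_graph V E"
    and "valid_edge_partition V E T F"
  shows "card {C. C \<subseteq> E \<and> is_cycle C \<and> compatible T F C}
       = card {e \<in> T. \<forall>u\<in>e. \<forall>v\<in>e. conn F u v}"
proof -
  have E: "E = T \<union> F" and "T \<inter> F = {}" and "acyclic_edges F"
    using assms(2) unfolding valid_edge_partition_def spanning_2forest_def by auto
  have "bij_betw (\<lambda>C. the_elem (C \<inter> T)) {C. C \<subseteq> T \<union> F \<and> is_cycle C \<and> compatible T F C}
      {e \<in> T. \<forall>u\<in>e. \<forall>v\<in>e. conn F u v}"
    unfolding bij_betw_def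
    using inj_on_compatible_cycle_tree_edge[OF \<open>acyclic_edges F\<close>]
      compatible_cycle_tree_edges[OF assms(1)[unfolded E] \<open>T \<inter> F = {}\<close>] by blast
  then show ?thesis unfolding E by (rule bij_betw_same_card)
qed

end
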